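(* Let $\mathcal D=\{d_1,\dots,d_s\}$ and $\mathcal H=\{h_1,\dots,h_n\}$ be finite sets, each $h_i$ a probability distribution $\mathbb P[\cdot\mid h_i]$ on $\mathcal D$, and let $\bm p=(p_1,\dots,p_n)$ be a prior on $\mathcal H$ with all $p_i>0$. Let $m_1,m_2,\dots$ be positive integers and for each $t\ge1$ let $P^{|t}$ be the $n\times n$ matrix $$P^{|t}_{ij}=\sum_{\mathbf d\in\mathcal D^{m_t}}\frac{\mathbb P[\mathbf d\mid h_i]\,\mathbb P[\mathbf d\mid h_j]\,p_j}{\sum_{k=1}^n\mathbb P[\mathbf d\mid h_k]\,p_k},$$ where $\mathbb P[(x_1,\dots,x_m)\mid h]=\prod_{k=1}^m\mathbb P[x_k\mid h]$. Let $P^{\le t}=P^{|1}P^{|2}\cdots P^{|t}$ and ${\tt d}_1=\min_{j\ne1}d_{RS}(\mathbb P[\cdot\mid h_1],\mathbb P[\cdot\mid h_j])$. Then for every $t\ge1$, $$\sum_{j=2}^nP^{\le t}_{1j}\le\frac12\sqrt{\frac{n(1-p_1)}{p_1}}\sum_{s=1}^te^{-\frac12{\tt d}_1^2m_s}.$$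
   Context: Root-sine distance: for probability vectors $\bm a,\bm b$ on $\mathcal D$, $d_{RS}(\bm a,\bm b)=\sqrt{1-\bigl(\sum_{i=1}^s\sqrt{a_ib_i}\bigr)^2}$. *)

theory Defs
  imports Complex_Main
begin

definition dRS :: "'d set \<Rightarrow> ('d \<Rightarrow> real) \<Rightarrow> ('d \<Rightarrow> real) \<Rightarrow> real" where
  "dRS D a b = sqrt (1 - (\<Sum>x\<in>D. sqrt (a x * b x))^2)"

definition seqs :: "'d set \<Rightarrow> nat \<Rightarrow> 'd list set" where
  "seqs D m = {xs. set xs \<subseteq> D \<and> length xs = m}"

(* P[(x_1,...,x_m) | h_i] = prod_k P[x_k | h_i];  L i x = P[x | h_i] *)
definition seq_lik :: "(nat \<Rightarrow> 'd \<Rightarrow> real) \<Rightarrow> nat \<Rightarrow> 'd list \<Rightarrow> real" where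
  "seq_lik L i xs = prod_list (map (L i) xs)"

definition Pstep :: "'d set \<Rightarrow> (nat \<Rightarrow> 'd \<Rightarrow> real) \<Rightarrow> (nat \<Rightarrow> real) \<Rightarrow> nat \<Rightarrow> nat
                      \<Rightarrow> nat \<Rightarrow> nat \<Rightarrow> real" where
  "Pstep D L p n m i j =
     (\<Sum>ds\<in>seqs D m. seq_lik L i ds * seq_lik L j ds * p j / (\<Sum>k=1..n. seq_lik L k ds * p k))"

definition matmul :: "nat \<Rightarrow> (nat \<Rightarrow> nat \<Rightarrow> real) \<Rightarrow> (nat \<Rightarrow> nat \<Rightarrow> real) \<Rightarrow> nat \<Rightarrow> nat \<Rightarrow> real" where
  "matmul n A B i j = (\<Sum>k=1..n. A i k * B k j)"

fun Pcum :: "'d set \<Rightarrow> (nat \<Rightarrow> 'd \<Rightarrow> real) \<Rightarrow> (nat \<Rightarrow> real) \<Rightarrow> nat \<Rightarrow> (nat \<Rightarrow> nat)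
              \<Rightarrow> nat \<Rightarrow> nat \<Rightarrow> nat \<Rightarrow> real" where
  "Pcum D L p n ms 0 = (\<lambda>i j. if i = j then 1 else 0)"
| "Pcum D L p n ms (Suc t) = matmul n (Pcum D L p n ms t) (Pstep D L p n (ms (Suc t)))"

end

theory Submission
  imports Defs "HOL-Analysis.Convex"
begin

text \<open>All one-step matrices are substochastic, so for products the off-diagonal mass of the
first row grows at most additively, \<open>\<Sum>\<^sub>j\<^sub>\<ge>\<^sub>2 (A Q)\<^sub>1\<^sub>j \<le> \<Sum>\<^sub>j\<^sub>\<ge>\<^sub>2 A\<^sub>1\<^sub>j + \<Sum>\<^sub>j\<^sub>\<ge>\<^sub>2 Q\<^sub>1\<^sub>j\<close>, and it suffices
to bound a single step. There the normaliser of the summand for data \<open>ds\<close> is at least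
\<open>\<ell>\<^sub>1 p\<^sub>1 + \<ell>\<^sub>j p\<^sub>j\<close>, so by AM-GM the summand is at most \<open>sqrt (p\<^sub>j / p\<^sub>1) sqrt (\<ell>\<^sub>1 \<ell>\<^sub>j) / 2\<close>.
Summed over \<open>D\<^sup>m\<close>, \<open>sqrt (\<ell>\<^sub>1 \<ell>\<^sub>j)\<close> factorises into the \<open>m\<close>-th power of the Bhattacharyya
coefficient \<open>BC = sqrt (1 - d\<^sub>R\<^sub>S\<^sup>2) \<le> exp (- d\<^sub>R\<^sub>S\<^sup>2 / 2)\<close>, and Cauchy-Schwarz gives
\<open>\<Sum>\<^sub>j\<^sub>\<ge>\<^sub>2 sqrt p\<^sub>j \<le> sqrt (n (1 - p\<^sub>1))\<close>.\<close>

lemma seqs_Suc: "seqs D (Suc m) = (\<lambda>(x, xs). x # xs) ` (D \<times> seqs D m)"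
  unfolding seqs_def by (auto simp: length_Suc_conv image_iff)

lemma sum_seqs_prod_list:
  fixes f :: "'a \<Rightarrow> real"
  shows "(\<Sum>xs\<in>seqs D m. prod_list (map f xs)) = (\<Sum>x\<in>D. f x) ^ m"
proof (induction m)
  case 0
  have "seqs D 0 = {[]}" unfolding seqs_def by auto
  then show ?case by simp
next
  case (Suc m)
  have inj: "inj_on (\<lambda>(x, xs). x # xs) (D \<times> seqs D m)" by (auto simp: inj_on_def)
  have "(\<Sum>xs\<in>seqs D (Suc m). prod_list (map f xs))
      = (\<Sum>(x, xs)\<in>D \<times> seqs D m. f x * prod_list (map f xs))"
    unfolding seqs_Suc by (subst sum.reindex[OF inj]) (simp add: case_prod_beta)
  also have "\<dots> = (\<Sum>x\<in>D. f x) * (\<Sum>xs\<in>seqs D m. prod_list (map f xs))"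
    by (simp add: sum.cartesian_product[symmetric] sum_product)
  finally show ?case using Suc by simp
qed

lemma sqrt_prod_list_mult:
  "sqrt (prod_list (map f xs) * prod_list (map g xs)) = prod_list (map (\<lambda>x. sqrt (f x * g x)) xs)"
  by (induction xs) (simp_all add: real_sqrt_mult algebra_simps)

lemma seq_lik_nonneg:
  assumes "\<And>x. x \<in> D \<Longrightarrow> L i x \<ge> 0" and "ds \<in> seqs D m"
  shows "seq_lik L i ds \<ge> 0"
  unfolding seq_lik_def using assms by (intro prod_list_nonneg) (auto simp: seqs_def)

lemma sum_sqrt_le_sqrt_card_mult_sum:
  assumes "\<And>i. i \<in> I \<Longrightarrow> f i \<ge> 0"
  shows "(\<Sum>i\<in>I. sqrt (f i)) \<le> sqrt (real (card I) * (\<Sum>i\<in>I. f i))"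
proof (rule real_le_rsqrt)
  have "(\<Sum>i\<in>I. sqrt (f i))\<^sup>2 \<le> (\<Sum>i\<in>I. (sqrt (f i))\<^sup>2) * real (card I)"
    by (rule sum_squared_le_sum_of_squares)
  also have "\<dots> = real (card I) * (\<Sum>i\<in>I. f i)"
    using assms by (simp add: mult.commute)
  finally show "(\<Sum>i\<in>I. sqrt (f i))\<^sup>2 \<le> real (card I) * (\<Sum>i\<in>I. f i)" .
qed

lemma mult_divide_le_half_sqrt:
  fixes a b p q Z :: real
  assumes "a \<ge> 0" "b \<ge> 0" "p > 0" "q > 0" and Z: "Z \<ge> a * p + b * q"
  shows "a * b * q / Z \<le> sqrt (a * b) * sqrt q / (2 * sqrt p)"
proof (cases "a * b = 0")
  case True
  then show ?thesis by auto
next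
  case False
  with assms have a: "a > 0" and b: "b > 0" by auto
  define u where "u = sqrt (a * p)"
  define v where "v = sqrt (b * q)"
  have uv: "u > 0" "v > 0" "u\<^sup>2 = a * p" "v\<^sup>2 = b * q"
    using a b assms by (auto simp: u_def v_def)
  have "2 * u * v \<le> u\<^sup>2 + v\<^sup>2" by (rule sum_squares_bound)
  with Z uv have Z_ge: "2 * u * v \<le> Z" by simp
  moreover have "2 * u * v > 0" using uv by simp
  ultimately have "Z > 0" by linarith
  have "a * b * q = sqrt (a * b) * sqrt q / sqrt p * (u * v)"
    using a b assms unfolding u_def v_def by (simp add: real_sqrt_mult field_simps)
  moreover have "a * b * q / Z \<le> a * b * q / (2 * u * v)"
    using \<open>Z > 0\<close> Z_ge uv a b assms by (intro divide_left_mono) auto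
  ultimately show ?thesis
    using uv by (simp add: field_simps)
qed

definition bhattacharyya :: "'d set \<Rightarrow> ('d \<Rightarrow> real) \<Rightarrow> ('d \<Rightarrow> real) \<Rightarrow> real" where
  "bhattacharyya D a b = (\<Sum>x\<in>D. sqrt (a x * b x))"

lemma dRS_bhattacharyya: "dRS D a b = sqrt (1 - (bhattacharyya D a b)\<^sup>2)"
  unfolding dRS_def bhattacharyya_def ..

context
  fixes D :: "'d set" and a b :: "'d \<Rightarrow> real"
  assumes nonneg: "\<And>x. x \<in> D \<Longrightarrow> a x \<ge> 0" "\<And>x. x \<in> D \<Longrightarrow> b x \<ge> 0"
    and sum_one: "(\<Sum>x\<in>D. a x) = 1" "(\<Sum>x\<in>D. b x) = 1"
begin

lemma bhattacharyya_nonneg: "bhattacharyya D a b \<ge> 0"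
  unfolding bhattacharyya_def using nonneg by (intro sum_nonneg) auto

lemma bhattacharyya_le_1: "bhattacharyya D a b \<le> 1"
proof -
  have "bhattacharyya D a b \<le> (\<Sum>x\<in>D. (a x + b x) / 2)"
    unfolding bhattacharyya_def using nonneg by (intro sum_mono arith_geo_mean_sqrt) auto
  also have "\<dots> = 1"
    using sum_one by (simp add: sum_divide_distrib[symmetric] sum.distrib)
  finally show ?thesis .
qed

lemma dRS_nonneg: "dRS D a b \<ge> 0"
  using bhattacharyya_nonneg bhattacharyya_le_1
  by (simp add: dRS_bhattacharyya power_le_one)

lemma bhattacharyya_le_exp:
  assumes "0 \<le> d" "d \<le> dRS D a b"
  shows "bhattacharyya D a b \<le> exp (- d\<^sup>2 / 2)"
proof (rule power2_le_imp_le)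
  have "d\<^sup>2 \<le> (dRS D a b)\<^sup>2" using assms by (intro power_mono) auto
  also have "\<dots> = 1 - (bhattacharyya D a b)\<^sup>2"
    using bhattacharyya_nonneg bhattacharyya_le_1
    by (simp add: dRS_bhattacharyya power_le_one)
  finally have "(bhattacharyya D a b)\<^sup>2 \<le> 1 - d\<^sup>2" by simp
  also have "\<dots> \<le> exp (- d\<^sup>2)" using exp_ge_add_one_self[of "- d\<^sup>2"] by simp
  also have "\<dots> = (exp (- d\<^sup>2 / 2))\<^sup>2" by (simp flip: exp_double)
  finally show "(bhattacharyya D a b)\<^sup>2 \<le> (exp (- d\<^sup>2 / 2))\<^sup>2" .
qed simp

end

definition substochastic :: "nat \<Rightarrow> (nat \<Rightarrow> nat \<Rightarrow> real) \<Rightarrow> bool" where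
  "substochastic n A \<longleftrightarrow> (\<forall>i\<in>{1..n}. (\<forall>j\<in>{1..n}. A i j \<ge> 0) \<and> (\<Sum>j=1..n. A i j) \<le> 1)"

lemma substochastic_id: "substochastic n (\<lambda>i j. if i = j then 1 else 0)"
  unfolding substochastic_def by (simp add: sum.delta)

lemma substochastic_matmul:
  assumes A: "substochastic n A" and B: "substochastic n B"
  shows "substochastic n (matmul n A B)"
  unfolding substochastic_def
proof (intro ballI conjI)
  fix i j assume "i \<in> {1..n}" "j \<in> {1..n}"
  then show "matmul n A B i j \<ge> 0"
    using A B unfolding substochastic_def matmul_def by (auto intro!: sum_nonneg mult_nonneg_nonneg)
next
  fix i assume i: "i \<in> {1..n}"
  have "(\<Sum>j=1..n. matmul n A B i j) = (\<Sum>k=1..n. A i k * (\<Sum>j=1..n. B k j))"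
    by (simp add: matmul_def sum_distrib_left) (rule sum.swap)
  also have "\<dots> \<le> (\<Sum>k=1..n. A i k)"
    using A B i unfolding substochastic_def by (intro sum_mono mult_right_le_one_le sum_nonneg) auto
  also have "\<dots> \<le> 1" using A i unfolding substochastic_def by auto
  finally show "(\<Sum>j=1..n. matmul n A B i j) \<le> 1" .
qed

lemma substochastic_offdiag_bounds:
  assumes "substochastic n A" "k \<in> {1..n}"
  shows "(\<Sum>j=2..n. A k j) \<ge> 0" "(\<Sum>j=2..n. A k j) \<le> 1"
proof -
  have nonneg: "\<forall>j\<in>{1..n}. A k j \<ge> 0" and row: "(\<Sum>j=1..n. A k j) \<le> 1"
    using assms unfolding substochastic_def by auto
  then show "(\<Sum>j=2..n. A k j) \<ge> 0" by (intro sum_nonneg) auto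
  have "(\<Sum>j=2..n. A k j) \<le> (\<Sum>j=1..n. A k j)" using nonneg by (intro sum_mono2) auto
  with row show "(\<Sum>j=2..n. A k j) \<le> 1" by linarith
qed

lemma matmul_offdiag_le:
  assumes A: "substochastic n A" and Q: "substochastic n Q" and n: "n \<ge> 1"
  shows "(\<Sum>j=2..n. matmul n A Q 1 j) \<le> (\<Sum>j=2..n. A 1 j) + (\<Sum>j=2..n. Q 1 j)"
proof -
  define R where "R k = (\<Sum>j=2..n. Q k j)" for k
  have one: "(1::nat) \<in> {1..n}" using n by simp
  have A1: "\<forall>k\<in>{1..n}. A 1 k \<ge> 0" "(\<Sum>k=1..n. A 1 k) \<le> 1"
    using A one unfolding substochastic_def by auto
  have R: "0 \<le> R k" "R k \<le> 1" if "k \<in> {1..n}" for k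
    using substochastic_offdiag_bounds[OF Q that] unfolding R_def by auto
  have "(\<Sum>j=2..n. matmul n A Q 1 j) = (\<Sum>k=1..n. A 1 k * R k)"
    unfolding R_def by (simp add: matmul_def sum_distrib_left) (rule sum.swap)
  also have "\<dots> = A 1 1 * R 1 + (\<Sum>k=2..n. A 1 k * R k)"
    using n by (subst sum.atLeast_Suc_atMost) (simp_all add: numeral_2_eq_2)
  also have "\<dots> \<le> R 1 + (\<Sum>k=2..n. A 1 k)"
  proof (intro add_mono sum_mono)
    have "A 1 1 \<le> (\<Sum>k=1..n. A 1 k)" using A1 one by (intro member_le_sum) auto
    with A1 R[OF one] one show "A 1 1 * R 1 \<le> R 1"
      by (intro mult_left_le_one_le) auto
  next
    fix k assume "k \<in> {2..n}"
    with A1 R[of k] show "A 1 k * R k \<le> A 1 k" by (intro mult_right_le_one_le) auto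
  qed
  finally show ?thesis unfolding R_def by simp
qed

context
  fixes D :: "'d set" and L :: "nat \<Rightarrow> 'd \<Rightarrow> real" and p :: "nat \<Rightarrow> real" and n :: nat
  assumes L_nonneg: "\<And>i x. i \<in> {1..n} \<Longrightarrow> x \<in> D \<Longrightarrow> L i x \<ge> 0"
    and L_sum: "\<And>i. i \<in> {1..n} \<Longrightarrow> (\<Sum>x\<in>D. L i x) = 1"
    and p_pos: "\<And>i. i \<in> {1..n} \<Longrightarrow> p i > 0"
begin

lemma p_nonneg: "i \<in> {1..n} \<Longrightarrow> p i \<ge> 0"
  using p_pos by (simp add: less_imp_le)

lemma evidence_nonneg: "ds \<in> seqs D m \<Longrightarrow> (\<Sum>k=1..n. seq_lik L k ds * p k) \<ge> 0"
  by (intro sum_nonneg mult_nonneg_nonneg seq_lik_nonneg) (auto intro: L_nonneg p_nonneg)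

lemma substochastic_Pstep: "substochastic n (Pstep D L p n m)"
  unfolding substochastic_def
proof (intro ballI conjI)
  fix i j assume "i \<in> {1..n}" "j \<in> {1..n}"
  then show "Pstep D L p n m i j \<ge> 0"
    unfolding Pstep_def using evidence_nonneg
    by (intro sum_nonneg divide_nonneg_nonneg mult_nonneg_nonneg seq_lik_nonneg)
       (auto intro: L_nonneg p_nonneg)
next
  fix i assume i: "i \<in> {1..n}"
  let ?Z = "\<lambda>ds. \<Sum>k=1..n. seq_lik L k ds * p k"
  have "(\<Sum>j=1..n. Pstep D L p n m i j) = (\<Sum>ds\<in>seqs D m. seq_lik L i ds * ?Z ds / ?Z ds)"
    unfolding Pstep_def
    by (subst sum.swap) (simp add: sum_divide_distrib[symmetric] sum_distrib_left mult.assoc)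
  also have "\<dots> \<le> (\<Sum>ds\<in>seqs D m. seq_lik L i ds)"
  proof (intro sum_mono)
    fix ds assume "ds \<in> seqs D m"
    then have "seq_lik L i ds \<ge> 0" using i by (intro seq_lik_nonneg) (auto intro: L_nonneg)
    then show "seq_lik L i ds * ?Z ds / ?Z ds \<le> seq_lik L i ds"
      by (cases "?Z ds = 0") auto
  qed
  also have "\<dots> = 1"
    unfolding seq_lik_def sum_seqs_prod_list using L_sum[OF i] by simp
  finally show "(\<Sum>j=1..n. Pstep D L p n m i j) \<le> 1" .
qed

lemma substochastic_Pcum: "substochastic n (Pcum D L p n ms t)"
  by (induction t) (simp_all add: substochastic_id substochastic_matmul substochastic_Pstep)

lemma Pcum_offdiag_le_sum_Pstep:
  assumes "n \<ge> 1"
  shows "(\<Sum>j=2..n. Pcum D L p n ms t 1 j) \<le> (\<Sum>s=1..t. \<Sum>j=2..n. Pstep D L p n (ms s) 1 j)"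
proof (induction t)
  case (Suc t)
  then show ?case
    using matmul_offdiag_le[OF substochastic_Pcum substochastic_Pstep assms, of ms t "ms (Suc t)"]
    by simp
qed simp

lemma Pstep_le_bhattacharyya_power:
  assumes n: "n \<ge> 1" and j: "j \<in> {2..n}"
  shows "Pstep D L p n m 1 j \<le> sqrt (p j) / (2 * sqrt (p 1)) * bhattacharyya D (L 1) (L j) ^ m"
proof -
  have one: "(1::nat) \<in> {1..n}" and j1: "j \<in> {1..n}" using n j by auto
  have "Pstep D L p n m 1 j
      \<le> (\<Sum>ds\<in>seqs D m. sqrt (seq_lik L 1 ds * seq_lik L j ds) * sqrt (p j) / (2 * sqrt (p 1)))"
    unfolding Pstep_def
  proof (intro sum_mono mult_divide_le_half_sqrt)
    fix ds assume ds: "ds \<in> seqs D m"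
    show "seq_lik L 1 ds \<ge> 0" "seq_lik L j ds \<ge> 0"
      using one j1 by (auto intro!: seq_lik_nonneg[OF _ ds] L_nonneg)
    show "p 1 > 0" "p j > 0" using p_pos one j1 by auto
    have "(\<Sum>k\<in>{1, j}. seq_lik L k ds * p k) \<le> (\<Sum>k=1..n. seq_lik L k ds * p k)"
      using one j1 ds
      by (intro sum_mono2 mult_nonneg_nonneg seq_lik_nonneg) (auto intro: L_nonneg p_nonneg)
    then show "seq_lik L 1 ds * p 1 + seq_lik L j ds * p j \<le> (\<Sum>k=1..n. seq_lik L k ds * p k)"
      using j by simp
  qed
  also have "\<dots> = sqrt (p j) / (2 * sqrt (p 1))
                  * (\<Sum>ds\<in>seqs D m. prod_list (map (\<lambda>x. sqrt (L 1 x * L j x)) ds))"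
    unfolding seq_lik_def sqrt_prod_list_mult
    by (simp add: sum_distrib_left sum_divide_distrib mult.commute)
  also have "\<dots> = sqrt (p j) / (2 * sqrt (p 1)) * bhattacharyya D (L 1) (L j) ^ m"
    unfolding sum_seqs_prod_list bhattacharyya_def ..
  finally show ?thesis .
qed

lemma bhattacharyya_le_exp_Min_dRS:
  assumes j: "j \<in> {2..n}"
  shows "bhattacharyya D (L 1) (L j) \<le> exp (- (Min {dRS D (L 1) (L k) | k. k \<in> {2..n}})\<^sup>2 / 2)"
proof -
  define S where "S = {dRS D (L 1) (L k) | k. k \<in> {2..n}}"
  have prob: "\<forall>x\<in>D. L i x \<ge> 0" "(\<Sum>x\<in>D. L i x) = 1" if "i \<in> {1..n}" for i
    using that L_nonneg L_sum by auto
  have one: "(1::nat) \<in> {1..n}" using j by simp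
  have "Min S \<in> S" using j by (intro Min_in) (auto simp: S_def)
  then obtain k where k: "k \<in> {2..n}" and Min_eq: "Min S = dRS D (L 1) (L k)"
    unfolding S_def by auto
  have "Min S \<ge> 0"
    unfolding Min_eq using prob[OF one] prob[of k] k by (intro dRS_nonneg) simp_all
  moreover have "Min S \<le> dRS D (L 1) (L j)" unfolding S_def using j by (intro Min_le) auto
  ultimately show ?thesis
    unfolding S_def[symmetric] using prob[OF one] prob[of j] j
    by (intro bhattacharyya_le_exp) simp_all
qed

lemma sum_sqrt_prior_le:
  assumes p_sum: "(\<Sum>i=1..n. p i) = 1" and n: "n \<ge> 1"
  shows "(\<Sum>j=2..n. sqrt (p j)) / (2 * sqrt (p 1)) \<le> 1/2 * sqrt (real n * (1 - p 1) / p 1)"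
proof -
  have p_rest: "(\<Sum>j=2..n. p j) = 1 - p 1"
    using p_sum n by (subst (asm) sum.atLeast_Suc_atMost) (simp_all add: numeral_2_eq_2)
  have "(\<Sum>j=2..n. sqrt (p j)) \<le> sqrt (real (card {2..n}) * (\<Sum>j=2..n. p j))"
    by (intro sum_sqrt_le_sqrt_card_mult_sum) (auto intro: p_nonneg)
  also have "\<dots> \<le> sqrt (real n * (1 - p 1))"
    using p_rest sum_nonneg[of "{2..n}" p] p_nonneg
    by (intro real_sqrt_le_mono) (auto intro!: mult_right_mono)
  finally show ?thesis
    using p_pos[of 1] n by (simp add: real_sqrt_divide divide_right_mono)
qed

lemma Pstep_offdiag_le:
  assumes p_sum: "(\<Sum>i=1..n. p i) = 1" and n: "n \<ge> 1"
  shows "(\<Sum>j=2..n. Pstep D L p n m 1 j) \<le> 1/2 * sqrt (real n * (1 - p 1) / p 1) *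
           exp (- 1/2 * (Min {dRS D (L 1) (L j) | j. j \<in> {2..n}})\<^sup>2 * real m)"
proof -
  define E where "E = exp (- (Min {dRS D (L 1) (L j) | j. j \<in> {2..n}})\<^sup>2 / 2)"
  have "Pstep D L p n m 1 j \<le> sqrt (p j) / (2 * sqrt (p 1)) * E ^ m" if j: "j \<in> {2..n}" for j
  proof -
    have "0 \<le> bhattacharyya D (L 1) (L j)"
      using j L_nonneg L_sum by (intro bhattacharyya_nonneg) auto
    then have "bhattacharyya D (L 1) (L j) ^ m \<le> E ^ m"
      unfolding E_def using bhattacharyya_le_exp_Min_dRS[OF j] by (intro power_mono)
    then have "sqrt (p j) / (2 * sqrt (p 1)) * bhattacharyya D (L 1) (L j) ^ m
             \<le> sqrt (p j) / (2 * sqrt (p 1)) * E ^ m"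
      using j p_nonneg[of j] p_nonneg[of 1] by (intro mult_left_mono) auto
    with Pstep_le_bhattacharyya_power[OF n j, of m] show ?thesis by linarith
  qed
  then have "(\<Sum>j=2..n. Pstep D L p n m 1 j) \<le> (\<Sum>j=2..n. sqrt (p j) / (2 * sqrt (p 1)) * E ^ m)"
    by (rule sum_mono)
  also have "\<dots> = (\<Sum>j=2..n. sqrt (p j)) / (2 * sqrt (p 1)) * E ^ m"
    by (simp add: sum_distrib_right sum_divide_distrib)
  also have "\<dots> \<le> 1/2 * sqrt (real n * (1 - p 1) / p 1) * E ^ m"
    using sum_sqrt_prior_le[OF p_sum n] by (rule mult_right_mono) (simp add: E_def)
  also have "E ^ m = exp (- 1/2 * (Min {dRS D (L 1) (L j) | j. j \<in> {2..n}})\<^sup>2 * real m)"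
    unfolding E_def exp_of_nat_mult[symmetric] by (simp add: field_simps)
  finally show ?thesis .
qed

end

theorem lemma1:
  fixes D :: "'d set" and L :: "nat \<Rightarrow> 'd \<Rightarrow> real" and p :: "nat \<Rightarrow> real"
    and n :: nat and ms :: "nat \<Rightarrow> nat" and t :: nat
  assumes "finite D"
    and "\<And>i x. i \<in> {1..n} \<Longrightarrow> x \<in> D \<Longrightarrow> L i x \<ge> 0"
    and "\<And>i. i \<in> {1..n} \<Longrightarrow> (\<Sum>x\<in>D. L i x) = 1"
    and "\<And>i. i \<in> {1..n} \<Longrightarrow> p i > 0"
    and "(\<Sum>i=1..n. p i) = 1"
    and "n \<ge> 1"
    and "\<And>s. s \<ge> 1 \<Longrightarrow> ms s > 0"
    and "t \<ge> 1"
  shows "(\<Sum>j=2..n. Pcum D L p n ms t 1 j)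
         \<le> 1/2 * sqrt (real n * (1 - p 1) / p 1) *
           (\<Sum>s=1..t. exp (- 1/2 * (Min {dRS D (L 1) (L j) | j. j \<in> {2..n}})^2 * real (ms s)))"
proof -
  have "(\<Sum>j=2..n. Pcum D L p n ms t 1 j) \<le> (\<Sum>s=1..t. \<Sum>j=2..n. Pstep D L p n (ms s) 1 j)"
    by (rule Pcum_offdiag_le_sum_Pstep[OF assms(2-4,6)])
  also have "\<dots> \<le> (\<Sum>s=1..t. 1/2 * sqrt (real n * (1 - p 1) / p 1) *
           exp (- 1/2 * (Min {dRS D (L 1) (L j) | j. j \<in> {2..n}})^2 * real (ms s)))"
    by (intro sum_mono Pstep_offdiag_le[OF assms(2-6)])
  also have "\<dots> = 1/2 * sqrt (real n * (1 - p 1) / p 1) *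
           (\<Sum>s=1..t. exp (- 1/2 * (Min {dRS D (L 1) (L j) | j. j \<in> {2..n}})^2 * real (ms s)))"
    by (simp add: sum_distrib_left)
  finally show ?thesis .
qed

end
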